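(* For every regular triangulation $T$ of $[0,1]^L$ there exists a generic fitness landscape $w:\{0,1\}^L\to\mathbb{R}_{\ge 0}$ that induces $T$ and whose fitness graph is the all arrows up graph, i.e. every edge of the cube is directed toward the endpoint with more $1$'s (so that fitness decreases with distance from the unique peak $1\cdots1$).
   Context: Genotypes $g\in\{0,1\}^L$ are vertices of $[0,1]^L$. The triangulation induced by a fitness landscape $w$ is the regular subdivision of $[0,1]^L$ obtained by projecting the upper faces of $\mathrm{conv}\{(g,w_g)\}\subset\mathbb{R}^{L+1}$; a triangulation is regular if it is induced in this way by some landscape; $w$ is generic if all $w_g$ are distinct and the induced subdivision is a triangulation. The fitness graph directs each edge between Hamming neighbours toward the genotype of higher fitness. *)

theory Defs
  imports "HOL-Analysis.Analysis"
begin

text \<open>Genotypes are the vertices of the cube [0,1]^L, with L = CARD('n).\<close>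
definition cube_vertices :: "(real ^ 'n) set" where
  "cube_vertices = {x. \<forall>i. x $ i = 0 \<or> x $ i = 1}"

text \<open>Cells (of all dimensions) of the regular subdivision induced by a landscape w:
  vertex sets of the upper faces of conv{(g, w g)}, i.e. the nonempty sets of genotypes on
  which some non-vertical affine function a.x + b that dominates w on the cube is attained.\<close>
definition induced_subdivision :: "(real ^ 'n \<Rightarrow> real) \<Rightarrow> (real ^ 'n) set set" where
  "induced_subdivision w =
     {S. S \<noteq> {} \<and> (\<exists>a b. (\<forall>g\<in>cube_vertices. w g \<le> a \<bullet> g + b) \<and>
                         S = {g \<in> cube_vertices. a \<bullet> g + b = w g})}"

definition is_triangulation :: "(real ^ 'n) set set \<Rightarrow> bool" where
  "is_triangulation T \<longleftrightarrow> (\<forall>S\<in>T. \<not> affine_dependent S)"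

definition regular_triangulation :: "(real ^ 'n) set set \<Rightarrow> bool" where
  "regular_triangulation T \<longleftrightarrow>
     (\<exists>w. induced_subdivision w = T) \<and> is_triangulation T"

definition generic_landscape :: "(real ^ 'n \<Rightarrow> real) \<Rightarrow> bool" where
  "generic_landscape w \<longleftrightarrow>
     inj_on w cube_vertices \<and> is_triangulation (induced_subdivision w)"

definition set_coord :: "real ^ 'n \<Rightarrow> 'n \<Rightarrow> real ^ 'n" where
  "set_coord x i = (\<chi> j. if j = i then 1 else x $ j)"

definition all_arrows_up :: "(real ^ 'n \<Rightarrow> real) \<Rightarrow> bool" where
  "all_arrows_up w \<longleftrightarrow>
     (\<forall>g\<in>cube_vertices. \<forall>i. g $ i = 0 \<longrightarrow> w g < w (set_coord g i))"

end

theory Submission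
  imports Defs
begin

text \<open>Adding an affine function \<open>c \<bullet> g + d\<close> to a landscape \<open>w\<close> only shears the lifted point
  configuration, so it has the same upper faces and induces the same subdivision. Starting from a
  landscape inducing \<open>T\<close>, add a linear function whose coefficients all exceed the spread of \<open>w\<close>:
  then raising any coordinate from 0 to 1 increases fitness. The admissible coefficient vectors
  form an open set, so one can be chosen off the finitely many hyperplanes on which two genotypes
  tie; this makes the landscape injective. A final constant shift makes it nonnegative.\<close>

lemma finite_cube_vertices: "finite (cube_vertices :: (real ^ 'n) set)"
proof -
  have "cube_vertices \<subseteq> range (\<lambda>S. (\<chi> i. if i \<in> S then 1 else 0) :: real ^ 'n)"
  proof
    fix x :: "real ^ 'n"
    assume "x \<in> cube_vertices"
    then have "x = (\<chi> i. if i \<in> {j. x $ j = 1} then 1 else 0)"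
      by (auto simp: cube_vertices_def vec_eq_iff)
    then show "x \<in> range (\<lambda>S. (\<chi> i. if i \<in> S then 1 else 0) :: real ^ 'n)"
      by blast
  qed
  then show ?thesis
    by (rule finite_subset) simp
qed

lemma set_coord_in_cube_vertices: "g \<in> cube_vertices \<Longrightarrow> set_coord g i \<in> cube_vertices"
  by (auto simp: cube_vertices_def set_coord_def)

lemma inner_set_coord:
  assumes "g $ i = 0"
  shows "a \<bullet> set_coord g i = a \<bullet> g + a $ i"
proof -
  have "a \<bullet> set_coord g i - a \<bullet> g = (\<Sum>j\<in>UNIV. a $ j * (set_coord g i $ j - g $ j))"
    by (simp add: inner_vec_def sum_subtractf[symmetric] algebra_simps)
  also have "\<dots> = (\<Sum>j\<in>UNIV. if j = i then a $ i else 0)"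
    by (rule sum.cong) (auto simp: set_coord_def assms)
  also have "\<dots> = a $ i"
    by simp
  finally show ?thesis
    by simp
qed

lemma inner_cube_vertex_nonneg:
  assumes "g \<in> cube_vertices" and "\<forall>i. 0 \<le> a $ i"
  shows "0 \<le> a \<bullet> g"
  using assms unfolding inner_vec_def cube_vertices_def
  by (auto intro!: sum_nonneg) (metis mult_nonneg_nonneg order_refl zero_le_one)

lemma induced_subdivision_add_affine_subset:
  "induced_subdivision w \<subseteq> induced_subdivision (\<lambda>g. w g + c \<bullet> g + d)"
proof
  fix S
  assume "S \<in> induced_subdivision w"
  then obtain a b where "S \<noteq> {}" "\<forall>g\<in>cube_vertices. w g \<le> a \<bullet> g + b"
    and "S = {g \<in> cube_vertices. a \<bullet> g + b = w g}"
    by (auto simp: induced_subdivision_def)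
  then show "S \<in> induced_subdivision (\<lambda>g. w g + c \<bullet> g + d)"
    unfolding induced_subdivision_def
    by (intro CollectI conjI exI[of _ "a + c"] exI[of _ "b + d"]) (auto simp: inner_add_left)
qed

lemma induced_subdivision_add_affine:
  "induced_subdivision (\<lambda>g. w g + c \<bullet> g + d) = induced_subdivision w"
proof
  show "induced_subdivision (\<lambda>g. w g + c \<bullet> g + d) \<subseteq> induced_subdivision w"
    using induced_subdivision_add_affine_subset[of "\<lambda>g. w g + c \<bullet> g + d" "- c" "- d"]
    by simp
qed (rule induced_subdivision_add_affine_subset)

lemma ex_inj_on_add_inner:
  fixes f :: "'a::euclidean_space \<Rightarrow> real"
  assumes "finite S" and "open U" and "U \<noteq> {}"
  shows "\<exists>a\<in>U. inj_on (\<lambda>x. f x + a \<bullet> x) S"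
proof -
  define ties where "ties = (\<lambda>(x, y). {a. (x - y) \<bullet> a = f y - f x}) ` {(x, y) \<in> S \<times> S. x \<noteq> y}"
  have "negligible (\<Union>ties)"
  proof (rule negligible_Union)
    show "finite ties"
      unfolding ties_def using assms(1) by (auto intro: finite_subset[of _ "S \<times> S"])
  qed (auto simp: ties_def intro!: negligible_hyperplane)
  moreover have "\<not> negligible U"
    using assms(2,3) by (rule open_not_negligible)
  ultimately obtain a where "a \<in> U" and a_off_ties: "a \<notin> \<Union>ties"
    using negligible_subset by blast
  have "inj_on (\<lambda>x. f x + a \<bullet> x) S"
  proof (rule inj_onI, rule ccontr)
    fix x y
    assume "x \<in> S" "y \<in> S" "f x + a \<bullet> x = f y + a \<bullet> y" "x \<noteq> y"
    then have "(x - y) \<bullet> a = f y - f x"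
      by (simp add: inner_diff_left inner_commute algebra_simps)
    with \<open>x \<in> S\<close> \<open>y \<in> S\<close> \<open>x \<noteq> y\<close> have "a \<in> \<Union>ties"
      unfolding ties_def by blast
    with a_off_ties show False ..
  qed
  with \<open>a \<in> U\<close> show ?thesis ..
qed

lemma all_arrows_up_add_steep_linear:
  fixes a :: "real ^ 'n"
  assumes "\<forall>g\<in>cube_vertices. \<bar>w g\<bar> \<le> M" and "\<forall>i. 2 * M < a $ i"
  shows "all_arrows_up (\<lambda>g. w g + a \<bullet> g + d)"
  unfolding all_arrows_up_def
proof (intro ballI allI impI)
  fix g :: "real ^ 'n" and i
  assume g: "g \<in> cube_vertices" and "g $ i = 0"
  then have "a \<bullet> set_coord g i = a \<bullet> g + a $ i"
    by (simp add: inner_set_coord)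
  moreover have "\<bar>w g\<bar> \<le> M" "\<bar>w (set_coord g i)\<bar> \<le> M"
    using assms(1) g set_coord_in_cube_vertices by auto
  ultimately show "w g + a \<bullet> g + d < w (set_coord g i) + a \<bullet> set_coord g i + d"
    using assms(2)[rule_format, of i] by linarith
qed

theorem mainTheorem6:
  fixes T :: "(real ^ 'n) set set"
  assumes "regular_triangulation T"
  shows "\<exists>w :: real ^ 'n \<Rightarrow> real.
           (\<forall>g\<in>cube_vertices. 0 \<le> w g) \<and> generic_landscape w \<and>
           induced_subdivision w = T \<and> all_arrows_up w"
proof -
  obtain w where w_T: "induced_subdivision w = T" and "is_triangulation T"
    using assms unfolding regular_triangulation_def by blast
  obtain M where "M > 0" and w_bound: "\<forall>g\<in>cube_vertices. \<bar>w g\<bar> \<le> M"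
    using finite_imp_bounded[OF finite_imageI[OF finite_cube_vertices, of w]]
    by (auto simp: bounded_pos)
  obtain a where "a \<in> box (\<chi> i. 2 * M) (\<chi> i. 2 * M + 1)"
    and inj: "inj_on (\<lambda>g. w g + a \<bullet> g) cube_vertices"
    using ex_inj_on_add_inner[OF finite_cube_vertices open_box, of "\<chi> i. 2 * M" "\<chi> i. 2 * M + 1" w]
    by (auto simp: interval_eq_empty_cart)
  then have steep: "\<forall>i. 2 * M < a $ i"
    by (simp add: mem_box_cart)
  with \<open>M > 0\<close> have a_nonneg: "\<forall>i. 0 \<le> a $ i"
    by (smt (verit))
  define w' where "w' g = w g + a \<bullet> g + M" for g
  have "\<forall>g\<in>cube_vertices. 0 \<le> w' g"
    using w_bound inner_cube_vertex_nonneg[OF _ a_nonneg] by (fastforce simp: w'_def abs_le_iff)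
  moreover have "inj_on w' cube_vertices"
    using inj by (auto simp: inj_on_def w'_def)
  moreover have "induced_subdivision w' = T"
    unfolding w'_def induced_subdivision_add_affine w_T ..
  moreover have "all_arrows_up w'"
    unfolding w'_def using w_bound steep by (rule all_arrows_up_add_steep_linear)
  ultimately show ?thesis
    using \<open>is_triangulation T\<close> unfolding generic_landscape_def by blast
qed

end
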